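(* Let $\varphi_n(x)=\sqrt{n\pi}\cos^{2n}(\pi x)$ for $n\in\mathbb N$, and let $\eta\in(0,1)$. If $f\in L^1(-\eta,1-\eta)$ is continuous at $x=0$, then $$\lim_{n\to\infty}\int_{-\eta}^{1-\eta}f(x)\varphi_n(x)\,dx=f(0).$$ If $f\in L^1[0,1]$ is continuous at $x=0$ and at $x=1$, then $$\lim_{n\to\infty}\int_0^1 f(x)\varphi_n(x)\,dx=\frac{f(0)+f(1)}{2}.$$
   Context: $\cos^{2n}(y)$ denotes $(\cos y)^{2n}$. *)

theory Defs
  imports "HOL-Analysis.Analysis"
begin

definition phi :: "nat \<Rightarrow> real \<Rightarrow> real" where
  "phi n x = sqrt (real n * pi) * (cos (pi * x)) ^ (2 * n)"

end

theory Submission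
  imports Defs "HOL-Real_Asymp.Real_Asymp"
begin

(* Integration by parts gives the recursion (2n+2) I_{n+1} = (2n+1) I_n for the integral I_n of
   cos^{2n}(pi x) over [a,b], as long as the boundary term sin(pi x) cos^{2n+1}(pi x) takes the same
   value at a and b. This holds on every interval of length 1 and on [0,1/2] and [1/2,1], so there
   I_n = (b - a) w_n with w_n = prod_{k=1..n} (2k-1)/(2k), and Wallis' product gives
   sqrt(n pi) w_n --> 1, so the mass of phi_n on [a,b] tends to b - a. Moreover phi_n tends to 0
   uniformly on compact sets free of integers, so on an interval whose only integer is p the kernel
   phi_n concentrates at p: the integral of f phi_n tends to (b - a) f(p) whenever f is integrable
   and continuous at p. On [-eta, 1-eta] take p = 0; split [0,1] at 1/2 and take p = 0 and p = 1. *)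

lemma set_integrable_mult_bounded:
  fixes f g :: "'a \<Rightarrow> real"
  assumes f: "set_integrable M A f" and g: "g \<in> borel_measurable M"
    and bound: "\<And>x. x \<in> A \<Longrightarrow> \<bar>g x\<bar> \<le> B"
  shows "set_integrable M A (\<lambda>x. f x * g x)"
proof (rule set_integrable_bound[OF set_integrable_mult_right[OF f, of B]])
  have "set_borel_measurable M A f"
    using f unfolding set_integrable_def set_borel_measurable_def by (rule borel_measurable_integrable)
  then show "set_borel_measurable M A (\<lambda>x. f x * g x)"
    using g unfolding set_borel_measurable_def by (simp add: mult.assoc[symmetric] borel_measurable_times)
  show "AE x in M. x \<in> A \<longrightarrow> norm (f x * g x) \<le> norm (B * f x)"
  proof (intro AE_I2 impI)
    fix x assume "x \<in> A"
    then have "\<bar>f x\<bar> * \<bar>g x\<bar> \<le> \<bar>f x\<bar> * \<bar>B\<bar>"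
      using bound by (intro mult_left_mono) force+
    then show "norm (f x * g x) \<le> norm (B * f x)"
      by (simp add: abs_mult mult.commute)
  qed
qed

lemma abs_set_integral_mult_le:
  fixes h K :: "'a \<Rightarrow> real"
  assumes h: "set_integrable M A h" and K: "set_integrable M A K"
    and hK: "set_integrable M A (\<lambda>x. h x * K x)"
    and K_nonneg: "\<And>x. x \<in> A \<Longrightarrow> 0 \<le> K x"
    and small: "\<And>x. x \<in> A \<Longrightarrow> \<bar>h x\<bar> \<le> \<epsilon> \<or> K x \<le> \<eta>"
    and "0 \<le> \<epsilon>" "0 \<le> \<eta>"
  shows "\<bar>LINT x:A|M. h x * K x\<bar> \<le> \<epsilon> * (LINT x:A|M. K x) + \<eta> * (LINT x:A|M. \<bar>h x\<bar>)"
proof -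
  have pointwise: "\<bar>h x * K x\<bar> \<le> \<epsilon> * K x + \<eta> * \<bar>h x\<bar>" if "x \<in> A" for x
  proof -
    have "\<bar>h x * K x\<bar> = \<bar>h x\<bar> * K x"
      using K_nonneg[OF that] by (simp add: abs_mult)
    with small[OF that] K_nonneg[OF that] \<open>0 \<le> \<epsilon>\<close> \<open>0 \<le> \<eta>\<close> show ?thesis
      by (smt (verit) abs_ge_zero mult_left_mono mult_right_mono mult_nonneg_nonneg mult.commute)
  qed
  have "\<bar>LINT x:A|M. h x * K x\<bar> \<le> (LINT x:A|M. \<bar>h x * K x\<bar>)"
    using set_integral_norm_bound[OF hK] by simp
  also have "\<dots> \<le> (LINT x:A|M. \<epsilon> * K x + \<eta> * \<bar>h x\<bar>)"
    using pointwise set_integrable_abs[OF hK] K set_integrable_abs[OF h]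
    by (intro set_integral_mono) auto
  also have "\<dots> = \<epsilon> * (LINT x:A|M. K x) + \<eta> * (LINT x:A|M. \<bar>h x\<bar>)"
    using K set_integrable_abs[OF h] by simp
  finally show ?thesis .
qed

lemma tendsto_set_integral_mult_kernel_0:
  fixes h :: "real \<Rightarrow> real" and K :: "nat \<Rightarrow> real \<Rightarrow> real"
  assumes h_int: "set_integrable lborel {a..b} h"
    and h_cont: "continuous (at p within {a..b}) h" and "h p = 0"
    and K_nonneg: "\<And>n x. x \<in> {a..b} \<Longrightarrow> 0 \<le> K n x"
    and K_int: "\<And>n. set_integrable lborel {a..b} (K n)"
    and hK_int: "\<And>n. set_integrable lborel {a..b} (\<lambda>x. h x * K n x)"
    and mass: "(\<lambda>n. LINT x:{a..b}|lborel. K n x) \<longlonglongrightarrow> m"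
    and away: "\<And>\<delta>. 0 < \<delta> \<Longrightarrow> uniform_limit {x \<in> {a..b}. \<delta> \<le> \<bar>x - p\<bar>} K (\<lambda>_. 0) sequentially"
  shows "(\<lambda>n. LINT x:{a..b}|lborel. h x * K n x) \<longlonglongrightarrow> 0"
proof (rule tendstoI)
  fix e :: real assume "0 < e"
  define C where "C = \<bar>m\<bar> + 1"
  define D where "D = \<bar>LINT x:{a..b}|lborel. \<bar>h x\<bar>\<bar> + 1"
  define \<epsilon> where "\<epsilon> = e / 4 / C"
  define \<eta> where "\<eta> = e / 4 / D"
  have "0 < C" "0 < D"
    by (simp_all add: C_def D_def add_nonneg_pos)
  then have "0 < \<epsilon>" "0 < \<eta>" and budget: "\<epsilon> * C + \<eta> * D = e / 2"
    using \<open>0 < e\<close> by (simp_all add: \<epsilon>_def \<eta>_def)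
  obtain \<delta> where "0 < \<delta>" and near: "\<And>x. x \<in> {a..b} \<Longrightarrow> \<bar>x - p\<bar> < \<delta> \<Longrightarrow> \<bar>h x\<bar> < \<epsilon>"
    using h_cont \<open>0 < \<epsilon>\<close> unfolding continuous_within_eps_delta dist_real_def \<open>h p = 0\<close> by auto
  have "eventually (\<lambda>n. \<bar>(LINT x:{a..b}|lborel. K n x) - m\<bar> < 1) sequentially"
    using tendstoD[OF mass, of 1] by (simp add: dist_real_def)
  moreover have "eventually (\<lambda>n. \<forall>x \<in> {x \<in> {a..b}. \<delta> \<le> \<bar>x - p\<bar>}. \<bar>K n x\<bar> < \<eta>) sequentially"
    using uniform_limitD[OF away[OF \<open>0 < \<delta>\<close>] \<open>0 < \<eta>\<close>] by (simp add: dist_real_def)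
  ultimately show "eventually (\<lambda>n. dist (LINT x:{a..b}|lborel. h x * K n x) 0 < e) sequentially"
  proof eventually_elim
    case (elim n)
    have "\<bar>LINT x:{a..b}|lborel. h x * K n x\<bar>
        \<le> \<epsilon> * (LINT x:{a..b}|lborel. K n x) + \<eta> * (LINT x:{a..b}|lborel. \<bar>h x\<bar>)"
    proof (rule abs_set_integral_mult_le[OF h_int K_int hK_int K_nonneg])
      show "\<bar>h x\<bar> \<le> \<epsilon> \<or> K n x \<le> \<eta>" if "x \<in> {a..b}" for x
        using that near[OF that] elim(2) by (cases "\<bar>x - p\<bar> < \<delta>") auto
    qed (use \<open>0 < \<epsilon>\<close> \<open>0 < \<eta>\<close> in auto)
    also have "\<dots> \<le> \<epsilon> * C + \<eta> * D"
      unfolding C_def D_def using elim(1) \<open>0 < \<epsilon>\<close> \<open>0 < \<eta>\<close>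
      by (intro add_mono mult_left_mono) auto
    finally show ?case
      using budget \<open>0 < e\<close> by simp
  qed
qed

lemma tendsto_set_integral_mult_kernel:
  fixes f :: "real \<Rightarrow> real" and K :: "nat \<Rightarrow> real \<Rightarrow> real"
  assumes f_int: "set_integrable lborel {a..b} f"
    and f_cont: "continuous (at p within {a..b}) f"
    and K_nonneg: "\<And>n x. x \<in> {a..b} \<Longrightarrow> 0 \<le> K n x"
    and K_int: "\<And>n. set_integrable lborel {a..b} (K n)"
    and fK_int: "\<And>n. set_integrable lborel {a..b} (\<lambda>x. f x * K n x)"
    and mass: "(\<lambda>n. LINT x:{a..b}|lborel. K n x) \<longlonglongrightarrow> m"
    and away: "\<And>\<delta>. 0 < \<delta> \<Longrightarrow> uniform_limit {x \<in> {a..b}. \<delta> \<le> \<bar>x - p\<bar>} K (\<lambda>_. 0) sequentially"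
  shows "(\<lambda>n. LINT x:{a..b}|lborel. f x * K n x) \<longlonglongrightarrow> m * f p"
proof -
  have fpK_int: "set_integrable lborel {a..b} (\<lambda>x. (f x - f p) * K n x)" for n
    unfolding left_diff_distrib using fK_int K_int by (intro set_integral_diff(1)) auto
  have split: "(LINT x:{a..b}|lborel. f x * K n x)
      = (LINT x:{a..b}|lborel. (f x - f p) * K n x) + f p * (LINT x:{a..b}|lborel. K n x)" for n
    unfolding left_diff_distrib using fK_int K_int by (subst set_integral_diff(2)) auto
  have "set_integrable lborel {a..b} (\<lambda>x. f x - f p)"
    by (intro set_integral_diff(1) f_int borel_integrable_atLeastAtMost' continuous_on_const)
  moreover have "continuous (at p within {a..b}) (\<lambda>x. f x - f p)"
    by (intro continuous_intros f_cont)
  ultimately have "(\<lambda>n. LINT x:{a..b}|lborel. (f x - f p) * K n x) \<longlonglongrightarrow> 0"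
    by (rule tendsto_set_integral_mult_kernel_0[OF _ _ _ K_nonneg K_int fpK_int mass away]) simp
  then have "(\<lambda>n. (LINT x:{a..b}|lborel. (f x - f p) * K n x) + f p * (LINT x:{a..b}|lborel. K n x))
      \<longlonglongrightarrow> 0 + f p * m"
    by (intro tendsto_add tendsto_mult tendsto_const mass)
  then show ?thesis
    unfolding split by (simp add: mult.commute)
qed

definition wallis_ratio :: "nat \<Rightarrow> real" where
  "wallis_ratio n = (\<Prod>k=1..n. (2 * real k - 1) / (2 * real k))"

lemma wallis_ratio_0 [simp]: "wallis_ratio 0 = 1"
  by (simp add: wallis_ratio_def)

lemma wallis_ratio_Suc: "wallis_ratio (Suc n) = wallis_ratio n * ((2 * real n + 1) / (2 * real n + 2))"
  unfolding wallis_ratio_def by (simp add: prod.nat_ivl_Suc' algebra_simps)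

lemma wallis_ratio_nonneg: "0 \<le> wallis_ratio n"
  unfolding wallis_ratio_def by (intro prod_nonneg) auto

lemma wallis_product_mult_wallis_ratio:
  "(\<Prod>k=1..n. (4 * real k^2) / (4 * real k^2 - 1)) * ((2 * real n + 1) * wallis_ratio n ^ 2) = 1"
proof (induction n)
  case 0
  then show ?case by simp
next
  case (Suc n)
  define P where "P = (\<Prod>k=1..n. (4 * real k^2) / (4 * real k^2 - 1))"
  define A where "A = (4 * (real n + 1)^2) / (4 * (real n + 1)^2 - 1)"
  define r where "r = (2 * real n + 1) / (2 * real n + 2)"
  have factor: "4 * (real n + 1)^2 - 1 = (2 * real n + 1) * (2 * real n + 3)"
    "(2 * real n + 2)^2 = 4 * (real n + 1)^2"
    by (simp_all add: power2_eq_square algebra_simps)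
  have step: "A * (2 * real n + 3) * r^2 = 2 * real n + 1"
    unfolding A_def r_def factor power_divide by (simp add: divide_simps power2_eq_square)
  have "(\<Prod>k=1..Suc n. (4 * real k^2) / (4 * real k^2 - 1)) * ((2 * real (Suc n) + 1) * wallis_ratio (Suc n) ^ 2)
      = (A * (2 * real n + 3) * r^2) * (P * wallis_ratio n ^ 2)"
    unfolding P_def A_def r_def wallis_ratio_Suc
    by (simp add: prod.nat_ivl_Suc' power_mult_distrib power_divide add.commute mult_ac)
  also have "\<dots> = 1"
    using Suc unfolding step P_def by (simp add: mult_ac)
  finally show ?case .
qed

lemma sqrt_mult_wallis_ratio_tendsto: "(\<lambda>n. sqrt (real n * pi) * wallis_ratio n) \<longlonglongrightarrow> 1"
proof -
  let ?W = "\<lambda>n. \<Prod>k=1..n. (4 * real k^2) / (4 * real k^2 - 1)"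
  have "(\<lambda>n. inverse (?W n)) \<longlonglongrightarrow> inverse (pi / 2)"
    using wallis by (rule tendsto_inverse) simp
  moreover have "inverse (?W n) = (2 * real n + 1) * wallis_ratio n ^ 2" for n
    using wallis_product_mult_wallis_ratio by (rule inverse_unique)
  ultimately have "(\<lambda>n. (2 * real n + 1) * wallis_ratio n ^ 2) \<longlonglongrightarrow> 2 / pi"
    by simp
  moreover have "(\<lambda>n. real n / (2 * real n + 1)) \<longlonglongrightarrow> 1 / 2"
    by real_asymp
  ultimately have "(\<lambda>n. pi * (real n / (2 * real n + 1)) * ((2 * real n + 1) * wallis_ratio n ^ 2))
      \<longlonglongrightarrow> pi * (1 / 2) * (2 / pi)"
    by (intro tendsto_mult tendsto_const)
  moreover have "pi * (real n / (2 * real n + 1)) * ((2 * real n + 1) * wallis_ratio n ^ 2)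
      = (sqrt (real n * pi) * wallis_ratio n)^2" for n
    by (simp add: field_simps)
  ultimately have "(\<lambda>n. (sqrt (real n * pi) * wallis_ratio n)^2) \<longlonglongrightarrow> 1"
    by simp
  then have "(\<lambda>n. sqrt ((sqrt (real n * pi) * wallis_ratio n)^2)) \<longlonglongrightarrow> sqrt 1"
    by (rule tendsto_real_sqrt)
  then show ?thesis
    using wallis_ratio_nonneg by simp
qed

lemma has_real_derivative_sin_mult_cos_power:
  "((\<lambda>x. sin (pi * x) * cos (pi * x) ^ (2 * n + 1)) has_real_derivative
     pi * ((2 * real n + 2) * cos (pi * x) ^ (2 * n + 2) - (2 * real n + 1) * cos (pi * x) ^ (2 * n))) (at x)"
proof -
  have "((\<lambda>x. sin (pi * x) * cos (pi * x) ^ (2 * n + 1)) has_real_derivative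
     pi * (cos (pi * x) ^ (2 * n + 2) - (2 * real n + 1) * sin (pi * x)^2 * cos (pi * x) ^ (2 * n))) (at x)"
    by (rule derivative_eq_intros refl)+ (simp add: power2_eq_square algebra_simps)
  also have "sin (pi * x)^2 = 1 - cos (pi * x)^2"
    by (rule sin_squared_eq)
  finally show ?thesis
    by (simp add: algebra_simps power_add power2_eq_square)
qed

lemma integral_cos_power_even:
  assumes "a \<le> b"
    and boundary: "\<And>n. sin (pi * a) * cos (pi * a) ^ (2 * n + 1) = sin (pi * b) * cos (pi * b) ^ (2 * n + 1)"
  shows "integral {a..b} (\<lambda>x. cos (pi * x) ^ (2 * n)) = (b - a) * wallis_ratio n"
proof (induction n)
  case 0
  then show ?case using \<open>a \<le> b\<close> by simp
next
  case (Suc n)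
  let ?J = "\<lambda>m. integral {a..b} (\<lambda>x. cos (pi * x) ^ m)"
  let ?D = "\<lambda>x. pi * ((2 * real n + 2) * cos (pi * x) ^ (2 * n + 2) - (2 * real n + 1) * cos (pi * x) ^ (2 * n))"
  have "(?D has_integral 0) {a..b}"
    using fundamental_theorem_of_calculus[OF \<open>a \<le> b\<close>, of "\<lambda>x. sin (pi * x) * cos (pi * x) ^ (2 * n + 1)" ?D]
      has_real_derivative_sin_mult_cos_power boundary[of n]
    by (simp add: has_real_derivative_iff_has_vector_derivative has_vector_derivative_at_within)
  moreover have "(?D has_integral pi * ((2 * real n + 2) * ?J (2 * n + 2) - (2 * real n + 1) * ?J (2 * n))) {a..b}"
    by (intro has_integral_mult_right has_integral_diff integrable_integral
        integrable_continuous_interval continuous_intros)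
  ultimately have "pi * ((2 * real n + 2) * ?J (2 * n + 2) - (2 * real n + 1) * ?J (2 * n)) = 0"
    by (rule has_integral_unique[symmetric])
  then have "(2 * real n + 2) * ?J (2 * n + 2) = (2 * real n + 1) * ?J (2 * n)"
    by simp
  then have "?J (2 * n + 2) = ?J (2 * n) * ((2 * real n + 1) / (2 * real n + 2))"
    by (simp add: field_simps)
  then show ?case
    using Suc by (simp add: wallis_ratio_Suc)
qed

lemma phi_nonneg: "0 \<le> phi n x"
  unfolding phi_def by (simp add: power_mult)

lemma phi_le_sqrt: "phi n x \<le> sqrt (real n * pi)"
proof -
  have "cos (pi * x) ^ (2 * n) \<le> 1"
    by (simp add: power_mult power_le_one abs_square_le_1)
  then show ?thesis
    unfolding phi_def by (simp add: mult_left_le)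
qed

lemma continuous_on_phi: "continuous_on A (phi n)"
  unfolding phi_def by (intro continuous_intros)

lemma borel_measurable_phi [measurable]: "phi n \<in> borel_measurable lborel"
  unfolding phi_def by measurable

lemma set_integrable_phi: "set_integrable lborel {a..b} (phi n)"
  by (rule borel_integrable_atLeastAtMost' continuous_on_phi)+

lemma set_integral_phi_tendsto:
  assumes "a \<le> b"
    and "\<And>n. sin (pi * a) * cos (pi * a) ^ (2 * n + 1) = sin (pi * b) * cos (pi * b) ^ (2 * n + 1)"
  shows "(\<lambda>n. LINT x:{a..b}|lborel. phi n x) \<longlonglongrightarrow> b - a"
proof -
  have "(LINT x:{a..b}|lborel. phi n x) = (b - a) * (sqrt (real n * pi) * wallis_ratio n)" for n
  proof -
    have "(LINT x:{a..b}|lborel. phi n x) = integral {a..b} (phi n)"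
      by (rule set_borel_integral_eq_integral(2)[OF set_integrable_phi])
    also have "\<dots> = sqrt (real n * pi) * integral {a..b} (\<lambda>x. cos (pi * x) ^ (2 * n))"
      unfolding phi_def by simp
    finally show ?thesis
      using integral_cos_power_even[OF assms] by simp
  qed
  moreover have "(\<lambda>n. (b - a) * (sqrt (real n * pi) * wallis_ratio n)) \<longlonglongrightarrow> (b - a) * 1"
    by (intro tendsto_mult tendsto_const sqrt_mult_wallis_ratio_tendsto)
  ultimately show ?thesis
    by simp
qed

lemma set_integral_phi_unit_interval_tendsto: "(\<lambda>n. LINT x:{a..a+1}|lborel. phi n x) \<longlonglongrightarrow> 1"
proof -
  have "sin (pi * (a + 1)) = - sin (pi * a)" "cos (pi * (a + 1)) = - cos (pi * a)"
    by (simp_all add: distrib_left)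
  then have "sin (pi * a) * cos (pi * a) ^ (2 * n + 1) = sin (pi * (a + 1)) * cos (pi * (a + 1)) ^ (2 * n + 1)" for n
    by simp
  then show ?thesis
    using set_integral_phi_tendsto[of a "a + 1"] by simp
qed

lemma set_integral_phi_half_intervals_tendsto:
  "(\<lambda>n. LINT x:{0..1/2}|lborel. phi n x) \<longlonglongrightarrow> 1/2"
  "(\<lambda>n. LINT x:{1/2..1}|lborel. phi n x) \<longlonglongrightarrow> 1/2"
proof -
  have "sin (pi * (1/2)) = 1" "cos (pi * (1/2)) = 0"
    by (simp_all add: field_simps)
  then show "(\<lambda>n. LINT x:{0..1/2}|lborel. phi n x) \<longlonglongrightarrow> 1/2"
    "(\<lambda>n. LINT x:{1/2..1}|lborel. phi n x) \<longlonglongrightarrow> 1/2"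
    using set_integral_phi_tendsto[of 0 "1/2"] set_integral_phi_tendsto[of "1/2" 1] by simp_all
qed

lemma phi_le_of_cos_squared_le:
  assumes "0 \<le> q" and "cos (pi * x)^2 \<le> q"
  shows "phi n x \<le> sqrt pi * (real n * q ^ n)"
proof -
  have "phi n x = sqrt (real n * pi) * (cos (pi * x)^2) ^ n"
    unfolding phi_def by (simp add: power_mult)
  also have "\<dots> \<le> sqrt (real n * pi) * q ^ n"
    using assms(2) by (intro mult_left_mono power_mono) auto
  also have "\<dots> \<le> sqrt pi * (real n * q ^ n)"
  proof -
    have "sqrt (real n) \<le> real n"
      by (rule real_le_lsqrt) (simp_all add: power2_eq_square flip: of_nat_mult)
    then have "sqrt pi * sqrt (real n) * q ^ n \<le> sqrt pi * real n * q ^ n"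
      using \<open>0 \<le> q\<close> by (intro mult_right_mono mult_left_mono) simp_all
    then show ?thesis
      by (simp add: real_sqrt_mult mult_ac)
  qed
  finally show ?thesis .
qed

lemma uniform_limit_phi:
  assumes "compact S" and "S \<inter> \<int> = {}"
  shows "uniform_limit S phi (\<lambda>_. 0) sequentially"
proof (cases "S = {}")
  case False
  have "continuous_on S (\<lambda>x. cos (pi * x)^2)"
    by (intro continuous_intros)
  then obtain x0 where "x0 \<in> S" and x0_max: "\<And>y. y \<in> S \<Longrightarrow> cos (pi * y)^2 \<le> cos (pi * x0)^2"
    using continuous_attains_sup[OF \<open>compact S\<close> False] by blast
  define q where "q = cos (pi * x0)^2"
  have "sin (x0 * pi) \<noteq> 0"
    using \<open>x0 \<in> S\<close> assms(2) sin_times_pi_eq_0 by blast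
  then have "0 < sin (pi * x0)^2"
    by (simp add: mult.commute)
  then have "q < 1"
    using sin_cos_squared_add[of "pi * x0"] unfolding q_def by linarith
  have "0 \<le> q"
    by (simp add: q_def)
  show ?thesis
  proof (rule uniform_limitI)
    fix e :: real assume "0 < e"
    have "(\<lambda>n. sqrt pi * (real n * q ^ n)) \<longlonglongrightarrow> sqrt pi * 0"
      using \<open>0 \<le> q\<close> \<open>q < 1\<close> by (intro tendsto_mult tendsto_const powser_times_n_limit_0) simp
    then have "eventually (\<lambda>n. sqrt pi * (real n * q ^ n) < e) sequentially"
      using \<open>0 < e\<close> by (simp add: order_tendsto_iff)
    then show "eventually (\<lambda>n. \<forall>x\<in>S. dist (phi n x) 0 < e) sequentially"
    proof eventually_elim
      case (elim n)
      show ?case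
      proof
        fix x assume "x \<in> S"
        then have "phi n x \<le> sqrt pi * (real n * q ^ n)"
          using \<open>0 \<le> q\<close> x0_max unfolding q_def by (intro phi_le_of_cos_squared_le) auto
        then show "dist (phi n x) 0 < e"
          using elim phi_nonneg[of n x] by (simp add: dist_real_def)
      qed
    qed
  qed
qed simp

lemma set_integrable_mult_phi:
  fixes f :: "real \<Rightarrow> real"
  assumes "set_integrable lborel A f"
  shows "set_integrable lborel A (\<lambda>x. f x * phi n x)"
  using assms borel_measurable_phi
  by (rule set_integrable_mult_bounded[where B = "sqrt (real n * pi)"]) (simp add: phi_nonneg phi_le_sqrt)

lemma tendsto_set_integral_mult_phi:
  fixes f :: "real \<Rightarrow> real"
  assumes f_int: "set_integrable lborel {a..b} f"
    and f_cont: "continuous (at p within {a..b}) f"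
    and "p \<in> \<int>" and near_p: "\<And>x. x \<in> {a..b} \<Longrightarrow> \<bar>x - p\<bar> < 1"
    and mass: "(\<lambda>n. LINT x:{a..b}|lborel. phi n x) \<longlonglongrightarrow> m"
  shows "(\<lambda>n. LINT x:{a..b}|lborel. f x * phi n x) \<longlonglongrightarrow> m * f p"
proof (rule tendsto_set_integral_mult_kernel[OF f_int f_cont phi_nonneg set_integrable_phi _ mass])
  show "set_integrable lborel {a..b} (\<lambda>x. f x * phi n x)" for n
    using f_int by (rule set_integrable_mult_phi)
  fix \<delta> :: real assume "0 < \<delta>"
  have "{x \<in> {a..b}. \<delta> \<le> \<bar>x - p\<bar>} = {a..b} \<inter> {x. \<delta> \<le> \<bar>x - p\<bar>}"
    by blast
  also have "compact \<dots>"
    by (intro compact_Int_closed compact_Icc closed_Collect_le continuous_intros)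
  finally have "compact {x \<in> {a..b}. \<delta> \<le> \<bar>x - p\<bar>}" .
  moreover have "{x \<in> {a..b}. \<delta> \<le> \<bar>x - p\<bar>} \<inter> \<int> = {}"
    using near_p \<open>p \<in> \<int>\<close> \<open>0 < \<delta>\<close> Ints_eq_abs_less1 by fastforce
  ultimately show "uniform_limit {x \<in> {a..b}. \<delta> \<le> \<bar>x - p\<bar>} phi (\<lambda>_. 0) sequentially"
    by (rule uniform_limit_phi)
qed

lemma tendsto_set_integral_mult_phi_interior:
  fixes f :: "real \<Rightarrow> real"
  assumes "0 < \<eta>" "\<eta> < 1"
    and "set_integrable lborel {-\<eta>..1-\<eta>} f" "continuous (at 0 within {-\<eta>..1-\<eta>}) f"
  shows "(\<lambda>n. LINT x:{-\<eta>..1-\<eta>}|lborel. f x * phi n x) \<longlonglongrightarrow> f 0"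
proof -
  have "\<bar>x - 0\<bar> < 1" if "x \<in> {-\<eta>..1-\<eta>}" for x
    using that assms(1,2) by auto
  moreover have "(\<lambda>n. LINT x:{-\<eta>..1-\<eta>}|lborel. phi n x) \<longlonglongrightarrow> 1"
    using set_integral_phi_unit_interval_tendsto[of "-\<eta>"] by simp
  ultimately show ?thesis
    using tendsto_set_integral_mult_phi[OF assms(3,4) Ints_0] by fastforce
qed

lemma tendsto_set_integral_mult_phi_endpoints:
  fixes g :: "real \<Rightarrow> real"
  assumes g_int: "set_integrable lborel {0..1} g"
    and "continuous (at 0 within {0..1}) g" "continuous (at 1 within {0..1}) g"
  shows "(\<lambda>n. LINT x:{0..1}|lborel. g x * phi n x) \<longlonglongrightarrow> (g 0 + g 1) / 2"
proof -
  have left_int: "set_integrable lborel {0..1/2} g" and right_int: "set_integrable lborel {1/2..1} g"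
    by (rule set_integrable_subset[OF g_int]; auto)+
  have left_cont: "continuous (at 0 within {0..1/2}) g" and right_cont: "continuous (at 1 within {1/2..1}) g"
    by (rule continuous_within_subset[OF assms(2)] continuous_within_subset[OF assms(3)]; auto)+
  have split: "(LINT x:{0..1}|lborel. g x * phi n x)
      = (LINT x:{0..1/2}|lborel. g x * phi n x) + (LINT x:{1/2..1}|lborel. g x * phi n x)" for n
  proof -
    have "{0..1::real} = {0..1/2} \<union> {1/2..1}"
      by auto
    moreover have "AE x in lborel. \<not> (x \<in> {0..1/2::real} \<and> x \<in> {1/2..1})"
      using AE_lborel_singleton[of "1/2::real"] by eventually_elim auto
    then have "(LINT x:{0..1/2} \<union> {1/2..1}|lborel. g x * phi n x)
        = (LINT x:{0..1/2}|lborel. g x * phi n x) + (LINT x:{1/2..1}|lborel. g x * phi n x)"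
      by (rule set_integral_Un_AE) (auto intro: set_integrable_mult_phi left_int right_int)
    ultimately show ?thesis
      by simp
  qed
  have "(\<lambda>n. LINT x:{0..1/2}|lborel. g x * phi n x) \<longlonglongrightarrow> 1/2 * g 0"
    by (rule tendsto_set_integral_mult_phi[OF left_int left_cont Ints_0 _ set_integral_phi_half_intervals_tendsto(1)])
      auto
  moreover have "(\<lambda>n. LINT x:{1/2..1}|lborel. g x * phi n x) \<longlonglongrightarrow> 1/2 * g 1"
    by (rule tendsto_set_integral_mult_phi[OF right_int right_cont Ints_1 _ set_integral_phi_half_intervals_tendsto(2)])
      auto
  ultimately have "(\<lambda>n. (LINT x:{0..1/2}|lborel. g x * phi n x) + (LINT x:{1/2..1}|lborel. g x * phi n x))
      \<longlonglongrightarrow> 1/2 * g 0 + 1/2 * g 1"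
    by (rule tendsto_add)
  then show ?thesis
    unfolding split by (simp add: add_divide_distrib)
qed

theorem lemma3p2:
  fixes \<eta> :: real and f g :: "real \<Rightarrow> real"
  shows
  "(0 < \<eta> \<and> \<eta> < 1 \<and> set_integrable lborel {-\<eta>..1-\<eta>} f
      \<and> continuous (at 0 within {-\<eta>..1-\<eta>}) f
    \<longrightarrow> (\<lambda>n. LINT x:{-\<eta>..1-\<eta>}|lborel. f x * phi n x) \<longlonglongrightarrow> f 0)
   \<and> (set_integrable lborel {0..1} g
      \<and> continuous (at 0 within {0..1}) g \<and> continuous (at 1 within {0..1}) g
    \<longrightarrow> (\<lambda>n. LINT x:{0..1}|lborel. g x * phi n x) \<longlonglongrightarrow> (g 0 + g 1) / 2)"
  by (blast intro: tendsto_set_integral_mult_phi_interior tendsto_set_integral_mult_phi_endpoints)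

end
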